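(* Let $n\ge2$, $b\ge2$. Let $\mu_1,\mu_2,\dots$ be i.i.d. random permutations in $S_n$ with law $Q_b$, and define $\tau_0=\mathrm{id}$ and $\tau_r=\tau_{r-1}\circ\mu_r$ (i.e. $\tau_r(p)=\tau_{r-1}(\mu_r(p))$), the arrangement after $r$ successive $b$-shuffles. Then $(d(\tau_r^{-1}))_{r\ge0}$ is a Markov chain on $\{0,\dots,n-1\}$ with stationary distribution $\pi(j)=A(n,j)/n!$, and its transition matrix $K$ satisfies $K(i,j)=\pi(j)P_b(j,i)/\pi(i)$ for all $i,j$; that is, the formal time reversal of this chain with respect to $\pi$ is exactly the base-$b$ carries chain $P_b$.
   Context: For $\sigma\in S_n$, $\sigma$ has a descent at $i$ ($1\le i\le n-1$) if $\sigma(i+1)<\sigma(i)$; $d(\sigma)$ is the number of descents, and $A(n,j)$ (Eulerian number) is the number of $\sigma\in S_n$ with $d(\sigma)=j$. Binomial convention: $\binom{m}{n}=\frac{m(m-1)\cdots(m-n+1)}{n!}$ if $m\ge n$, and $0$ if $m<n$. The $b$-shuffle measure is $Q_b(\sigma)=\binom{n+b-d(\sigma^{-1})-1}{n}/b^n$ on $S_n$. The base-$b$ carries chain for adding $n$ numbers is the Markov chain on $\{0,\dots,n-1\}$ given by $\kappa_0=0$, $\kappa_{t+1}=\lfloor(\kappa_t+X_{t+1,1}+\dots+X_{t+1,n})/b\rfloor$ with $X_{t,k}$ i.i.d. uniform on $\{0,\dots,b-1\}$; its transition matrix is $P_b(i,j)=b^{-n}\sum_{l=0}^{j-\lfloor i/b\rfloor}(-1)^l\binom{n+1}{l}\binom{n-1-i+(j+1-l)b}{n}$.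 *)

theory Defs
  imports Complex_Main "HOL-Combinatorics.Permutations"
begin

definition des :: "nat \<Rightarrow> (nat \<Rightarrow> nat) \<Rightarrow> nat" where
  "des n \<sigma> = card {i \<in> {1..n-1}. \<sigma> (i+1) < \<sigma> i}"

definition eulerian :: "nat \<Rightarrow> nat \<Rightarrow> nat" where
  "eulerian n j = card {\<sigma>. \<sigma> permutes {1..n} \<and> des n \<sigma> = j}"

text \<open>Binomial with the paper's convention (m >= n: falling factorial / n!, else 0).\<close>
definition ibinom :: "int \<Rightarrow> nat \<Rightarrow> real" where
  "ibinom m k = (if m \<ge> int k then real (nat m choose k) else 0)"

definition Qb :: "nat \<Rightarrow> nat \<Rightarrow> (nat \<Rightarrow> nat) \<Rightarrow> real" where
  "Qb n b \<sigma> = ibinom (int n + int b - int (des n (inv \<sigma>)) - 1) n / real b ^ n"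

definition carries :: "nat \<Rightarrow> nat \<Rightarrow> nat \<Rightarrow> nat \<Rightarrow> real" where
  "carries n b i j = (\<Sum>l\<in>{0..int j - int (i div b)}.
      (-1) ^ nat l * real ((n+1) choose nat l)
      * ibinom (int n - 1 - int i + (int j + 1 - l) * int b) n) / real b ^ n"

definition pi_eul :: "nat \<Rightarrow> nat \<Rightarrow> real" where
  "pi_eul n j = real (eulerian n j) / fact n"

text \<open>tau_k = mu_1 o ... o mu_k for the list ms = [mu_1, ..., mu_r].\<close>
definition tau :: "(nat \<Rightarrow> nat) list \<Rightarrow> nat \<Rightarrow> (nat \<Rightarrow> nat)" where
  "tau ms k = foldl (\<circ>) id (take k ms)"

text \<open>P(D_0 = js!0, ..., D_r = js!r) where r = length js - 1, D_k = d(tau_k^{-1}),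
  mu_1..mu_r i.i.d. with law Q_b (joint law = product of Q_b over S_n^r).\<close>
definition pathprob :: "nat \<Rightarrow> nat \<Rightarrow> nat list \<Rightarrow> real" where
  "pathprob n b js =
     (\<Sum>ms \<in> {ms. length ms = length js - 1 \<and> (\<forall>\<mu>\<in>set ms. \<mu> permutes {1..n})}.
        (\<Prod>k<length ms. Qb n b (ms ! k))
        * (if (\<forall>k<length js. des n (inv (tau ms k)) = js ! k) then 1 else 0))"

end

theory Submission
  imports Defs "HOL-Library.FuncSet"
begin

(* A b-shuffle is modelled by a uniformly random digit function F : {1..n} -> {0..b-1};
   the resulting arrangement is the permutation rank_perm n F that sorts the positions by
   (F value, position).  Counting the digit functions with a given rank permutation shows
   that Q_b is exactly the push-forward of the uniform measure on digit functions.
   Composing with a fixed arrangement tau' of inverse-descent number j and counting the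
   descents of the result, a carry-recording bijection between digit functions and
   digit strings identifies the number of digit functions leading to an arrangement of
   inverse-descent number i with b^n P_b(j,i) (the carries chain started from carry j).
   Consequently, summing the weights of all shuffle sequences that end in a given
   arrangement, the joint weight depends only on the descent class of that arrangement
   (lumpability), which yields the Markov property of the descent process with kernel
   K(i,j) = pi(j) P_b(j,i) / pi(i).  Stationarity of pi and stochasticity of K follow from
   Q_b being a probability measure and P_b being stochastic. *)

section \<open>Binomial coefficients with the paper's convention\<close>

lemma ibinom_eq: "ibinom m k = (if 0 \<le> m then real (nat m choose k) else 0)"
  by (auto simp: ibinom_def binomial_eq_0)

lemma ibinom_0: "ibinom m 0 = (if 0 \<le> m then 1 else 0)"
  by (simp add: ibinom_eq)

lemma ibinom_pascal: "ibinom (m + 1) (Suc k) = ibinom m k + ibinom m (Suc k)"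
proof (cases "m \<ge> 0")
  case True
  then have "nat (m + 1) = Suc (nat m)" by auto
  then show ?thesis using True by (simp add: ibinom_eq)
next
  case False
  then show ?thesis by (cases "m = -1") (auto simp: ibinom_eq)
qed

lemma ibinom_hockey:
  "(\<Sum>x<c. ibinom (w - int x) k) = ibinom (w + 1) (Suc k) - ibinom (w + 1 - int c) (Suc k)"
proof (induction c)
  case 0
  then show ?case by simp
next
  case (Suc c)
  have "ibinom (w + 1 - int c) (Suc k) = ibinom (w - int c) k + ibinom (w - int c) (Suc k)"
    using ibinom_pascal[of "w - int c" k] by (simp add: algebra_simps)
  then show ?case using Suc by (simp add: algebra_simps)
qed

lemma alternating_binomial_shift:
  fixes f :: "nat \<Rightarrow> real"
  shows "(\<Sum>l\<le>Suc m. (-1)^l * real (Suc m choose l) * f l)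
       = (\<Sum>l\<le>m. (-1)^l * real (m choose l) * (f l - f (Suc l)))"
proof -
  have "(\<Sum>l\<le>Suc m. (-1)^l * real (Suc m choose l) * f l)
      = f 0 + (\<Sum>l\<le>m. (-1)^(Suc l) * real (Suc m choose Suc l) * f (Suc l))"
    by (subst sum.atMost_Suc_shift) simp
  also have "\<dots> = f 0 + (\<Sum>l\<le>m. (-1)^(Suc l) * real (m choose l) * f (Suc l)
                               + (-1)^(Suc l) * real (m choose Suc l) * f (Suc l))"
    by (simp add: algebra_simps)
  also have "\<dots> = (f 0 + (\<Sum>l\<le>m. (-1)^(Suc l) * real (m choose Suc l) * f (Suc l)))
                 + (\<Sum>l\<le>m. (-1)^(Suc l) * real (m choose l) * f (Suc l))"
    by (simp only: sum.distrib add_ac)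
  also have "f 0 + (\<Sum>l\<le>m. (-1)^(Suc l) * real (m choose Suc l) * f (Suc l))
      = (\<Sum>l\<le>m. (-1)^l * real (m choose l) * f l)"
    using sum.atMost_Suc_shift[of "\<lambda>l. (-1)^l * real (m choose l) * f l" m] by (simp add: binomial_eq_0)
  also have "(\<Sum>l\<le>m. (-1)^l * real (m choose l) * f l)
               + (\<Sum>l\<le>m. (-1)^(Suc l) * real (m choose l) * f (Suc l))
      = (\<Sum>l\<le>m. (-1)^l * real (m choose l) * (f l - f (Suc l)))"
    by (simp add: sum.distrib[symmetric] algebra_simps)
  finally show ?thesis .
qed

section \<open>Digit strings and their digit sums\<close>

definition digit_lists :: "nat \<Rightarrow> nat \<Rightarrow> nat list set" where
  "digit_lists b N = {xs. set xs \<subseteq> {..<b} \<and> length xs = N}"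

lemma finite_digit_lists: "finite (digit_lists b N)"
  unfolding digit_lists_def using finite_lists_length_eq[of "{..<b}" N] by simp

lemma card_digit_lists: "card (digit_lists b N) = b ^ N"
  unfolding digit_lists_def using card_lists_length_eq[of "{..<b}" N] by simp

lemma sum_digit_lists_Suc:
  "(\<Sum>xs\<in>digit_lists b (Suc N). h xs) = (\<Sum>x<b. \<Sum>ys\<in>digit_lists b N. h (x # ys))"
proof -
  have e: "digit_lists b (Suc N) = (\<lambda>(ys, x). x # ys) ` (digit_lists b N \<times> {..<b})"
    unfolding digit_lists_def by (rule lists_length_Suc_eq)
  have i: "inj_on (\<lambda>(ys, x). x # ys) (digit_lists b N \<times> {..<b})"
    by (auto simp: inj_on_def)
  have "(\<Sum>xs\<in>digit_lists b (Suc N). h xs) = (\<Sum>(ys, x)\<in>digit_lists b N \<times> {..<b}. h (x # ys))"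
    unfolding e by (subst sum.reindex[OF i]) (simp add: case_prod_beta)
  also have "\<dots> = (\<Sum>x<b. \<Sum>ys\<in>digit_lists b N. h (x # ys))"
    by (simp add: sum.cartesian_product[symmetric] sum.swap[of _ "{..<b}"])
  finally show ?thesis .
qed

definition digit_sum_count :: "nat \<Rightarrow> nat \<Rightarrow> int \<Rightarrow> real" where
  "digit_sum_count b N s = (\<Sum>xs\<in>digit_lists b N. if int (sum_list xs) = s then 1 else 0)"

lemma digit_sum_count_Suc:
  "digit_sum_count b (Suc N) s = (\<Sum>x<b. digit_sum_count b N (s - int x))"
  unfolding digit_sum_count_def sum_digit_lists_Suc
  by (intro sum.cong refl) (auto intro!: sum.cong)

lemma digit_sum_count_1: "digit_sum_count b (Suc 0) s = (if 0 \<le> s \<and> s < int b then 1 else 0)"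
proof -
  have "digit_lists b 0 = {[]}" by (auto simp: digit_lists_def)
  then have "digit_sum_count b (Suc 0) s = (\<Sum>x<b. if s = int x then 1 else 0)"
    by (simp only: digit_sum_count_Suc) (simp add: digit_sum_count_def)
  also have "\<dots> = (if 0 \<le> s \<and> s < int b then 1 else 0)"
  proof (cases "0 \<le> s \<and> s < int b")
    case True
    then have "(\<Sum>x<b. if s = int x then (1::real) else 0) = (\<Sum>x\<in>{nat s}. 1)"
      by (intro sum.mono_neutral_cong_right) auto
    then show ?thesis using True by simp
  qed (auto intro!: sum.neutral)
  finally show ?thesis .
qed

lemma digit_sum_count_formula:
  "digit_sum_count b (Suc M) s
     = (\<Sum>l\<le>Suc M. (-1)^l * real (Suc M choose l) * ibinom (s - int (l*b) + int M) M)"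
proof (induction M arbitrary: s)
  case 0
  then show ?case by (simp add: digit_sum_count_1 ibinom_0)
next
  case (Suc M)
  have hockey: "(\<Sum>x<b. ibinom (s - int (l*b) + int M - int x) M)
      = ibinom (s - int (l*b) + int (Suc M)) (Suc M) - ibinom (s - int (Suc l * b) + int (Suc M)) (Suc M)"
    for l
    using ibinom_hockey[where c=b and w="s - int (l*b) + int M" and k=M] by (simp add: algebra_simps)
  have "digit_sum_count b (Suc (Suc M)) s
      = (\<Sum>x<b. \<Sum>l\<le>Suc M. (-1)^l * real (Suc M choose l) * ibinom (s - int x - int (l*b) + int M) M)"
    using Suc by (simp add: digit_sum_count_Suc)
  also have "\<dots> = (\<Sum>l\<le>Suc M. (-1)^l * real (Suc M choose l)
                      * (\<Sum>x<b. ibinom (s - int (l*b) + int M - int x) M))"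
    by (subst sum.swap) (simp add: sum_distrib_left algebra_simps)
  also have "\<dots> = (\<Sum>l\<le>Suc M. (-1)^l * real (Suc M choose l) *
        (ibinom (s - int (l*b) + int (Suc M)) (Suc M) - ibinom (s - int (Suc l * b) + int (Suc M)) (Suc M)))"
    by (simp only: hockey)
  also have "\<dots> = (\<Sum>l\<le>Suc (Suc M). (-1)^l * real (Suc (Suc M) choose l)
                      * ibinom (s - int (l*b) + int (Suc M)) (Suc M))"
    by (rule alternating_binomial_shift[symmetric])
  finally show ?case .
qed

section \<open>The carries chain as a count of digit strings\<close>

lemma div_eq_iff_nat: "0 < (b::nat) \<Longrightarrow> a div b = i \<longleftrightarrow> i * b \<le> a \<and> a < Suc i * b"
  by (metis div_less_iff_less_mult div_nat_eqI div_times_less_eq_dividend lessI mult.commute)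

lemma sum_int_interval: "(\<Sum>l\<in>{0..t::int}. f l) = (\<Sum>l<nat (t + 1). f (int l))"
proof -
  have "{0..t} = int ` {..<nat (t + 1)}"
    by (auto simp: image_iff intro!: bexI[where x="nat _"])
  then show ?thesis by (simp add: sum.reindex)
qed

text \<open>Carry \<open>j\<close> plus a digit sum \<open>S\<close> produces carry \<open>i\<close> iff exactly one extra digit
  tops the sum up to \<open>(i+1)b - 1\<close>.\<close>
lemma carry_indicator:
  assumes "0 < b"
  shows "(\<Sum>x<b. if int x + int S = (int i + 1) * int b - 1 - int j then (1::real) else 0)
        = (if (j + S) div b = i then 1 else 0)"
proof -
  let ?s = "(int i + 1) * int b - 1 - int j - int S"
  have c: "(j + S) div b = i \<longleftrightarrow> 0 \<le> ?s \<and> ?s < int b"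
  proof -
    have "(j + S) div b = i \<longleftrightarrow> i * b \<le> j + S \<and> j + S < Suc i * b"
      by (rule div_eq_iff_nat[OF assms])
    also have "\<dots> \<longleftrightarrow> int i * int b \<le> int j + int S \<and> int j + int S < (int i + 1) * int b"
      by (metis of_nat_add of_nat_less_iff of_nat_le_iff of_nat_mult of_nat_Suc add.commute)
    also have "\<dots> \<longleftrightarrow> 0 \<le> ?s \<and> ?s < int b" by (auto simp: algebra_simps)
    finally show ?thesis .
  qed
  show ?thesis
  proof (cases "0 \<le> ?s \<and> ?s < int b")
    case True
    then have "(\<Sum>x<b. if int x + int S = (int i + 1) * int b - 1 - int j then (1::real) else 0)
        = (\<Sum>x\<in>{nat ?s}. 1)"
      by (intro sum.mono_neutral_cong_right) auto
    then show ?thesis using True c by simp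
  next
    case False
    then show ?thesis using c by (auto intro!: sum.neutral)
  qed
qed

lemma carry_step_count:
  assumes "0 < b"
  shows "(\<Sum>xs\<in>digit_lists b n. if (j + sum_list xs) div b = i then 1 else 0)
       = digit_sum_count b (Suc n) ((int i + 1) * int b - 1 - int j)"
proof -
  have "(\<Sum>xs\<in>digit_lists b n. if (j + sum_list xs) div b = i then 1 else 0)
      = (\<Sum>xs\<in>digit_lists b n. \<Sum>x<b.
           if int x + int (sum_list xs) = (int i + 1) * int b - 1 - int j then (1::real) else 0)"
    using carry_indicator[OF assms] by simp
  also have "\<dots> = digit_sum_count b (Suc n) ((int i + 1) * int b - 1 - int j)"
    unfolding digit_sum_count_def sum_digit_lists_Suc by (subst sum.swap) simp
  finally show ?thesis .
qed

text \<open>The defining alternating sum of \<open>P_b(j,i)\<close> is the inclusion-exclusion formula for that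
  digit-sum count: the terms omitted from the definition vanish.\<close>
lemma carries_eq_digit_sum_count:
  assumes "0 < b"
  shows "carries n b j i * real b ^ n = digit_sum_count b (Suc n) ((int i + 1) * int b - 1 - int j)"
proof -
  define s where "s = (int i + 1) * int b - 1 - int j"
  define T where "T l = (-1)^l * real (Suc n choose l) * ibinom (s - int (l*b) + int n) n" for l
  define A where "A = nat (int i - int (j div b) + 1)"
  have truncated: "carries n b j i * real b ^ n = (\<Sum>l<A. T l)"
    using assms unfolding carries_def sum_int_interval A_def T_def s_def
    by (simp add: algebra_simps)
  have vanish: "T l = 0" if "l \<ge> A" for l
  proof -
    have "int i + 1 - int l \<le> int (j div b)" using that unfolding A_def by auto
    then have "(int i + 1 - int l) * int b \<le> int (j div b) * int b"
      using assms by (intro mult_right_mono) auto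
    also have "\<dots> \<le> int j"
      by (metis div_times_less_eq_dividend of_nat_le_iff of_nat_mult)
    finally have "s - int (l*b) + int n < int n"
      unfolding s_def by (simp add: algebra_simps)
    then show ?thesis unfolding T_def ibinom_def by simp
  qed
  have "(\<Sum>l<A. T l) = (\<Sum>l<A + Suc (Suc n). T l)"
    by (intro sum.mono_neutral_left) (auto intro: vanish)
  also have "\<dots> = (\<Sum>l\<le>Suc n. T l)"
    by (intro sum.mono_neutral_right) (auto simp: T_def binomial_eq_0)
  finally show ?thesis
    using truncated unfolding digit_sum_count_formula T_def s_def by simp
qed

text \<open>Probabilistic meaning of \<open>P_b\<close>: \<open>b^n P_b(j,i)\<close> counts the digit strings \<open>xs\<close> of length
  \<open>n\<close> with \<open>(j + sum xs) div b = i\<close>, i.e. one step of the carries chain.\<close>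
lemma carries_digit_count:
  assumes "0 < b"
  shows "carries n b j i * real b ^ n
       = (\<Sum>xs\<in>digit_lists b n. if (j + sum_list xs) div b = i then 1 else 0)"
  using carries_eq_digit_sum_count[OF assms] carry_step_count[OF assms] by simp

lemma carries_nonneg:
  assumes "0 < b"
  shows "0 \<le> carries n b j i"
proof -
  have "0 \<le> carries n b j i * real b ^ n"
    unfolding carries_digit_count[OF assms] by (intro sum_nonneg) simp
  moreover have "0 < real b ^ n" using assms by simp
  ultimately show ?thesis by (simp add: zero_le_mult_iff)
qed

lemma sum_list_le_length_mult: "\<forall>x\<in>set xs. x \<le> c \<Longrightarrow> sum_list xs \<le> length xs * c"
  by (induction xs) auto

text \<open>From a carry below \<open>n\<close> the carries chain stays below \<open>n\<close>, so \<open>P_b\<close> is stochastic.\<close>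
lemma carries_row_sum:
  assumes b: "0 < b" and j: "j < n"
  shows "(\<Sum>i<n. carries n b j i) = 1"
proof -
  have one_carry: "(\<Sum>i<n. if (j + sum_list xs) div b = i then 1 else 0) = (1::real)"
    if xs: "xs \<in> digit_lists b n" for xs
  proof -
    have "sum_list xs \<le> n * (b - 1)"
      using sum_list_le_length_mult[of xs "b - 1"] xs unfolding digit_lists_def by fastforce
    moreover have "n * (b - 1) + n = n * b" using b by (cases b) auto
    ultimately have "j + sum_list xs < n * b" using j by linarith
    then have "(j + sum_list xs) div b < n" using b by (simp add: div_less_iff_less_mult)
    then show ?thesis by (simp add: sum.delta)
  qed
  have "(\<Sum>i<n. carries n b j i) * real b ^ n
      = (\<Sum>i<n. \<Sum>xs\<in>digit_lists b n. if (j + sum_list xs) div b = i then 1 else 0)"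
    by (simp add: sum_distrib_right carries_digit_count[OF b])
  also have "\<dots> = (\<Sum>xs\<in>digit_lists b n. \<Sum>i<n. if (j + sum_list xs) div b = i then 1 else 0)"
    by (rule sum.swap)
  also have "\<dots> = real b ^ n"
    using one_carry by (simp add: card_digit_lists)
  finally have "(\<Sum>i<n. carries n b j i) * real b ^ n = real b ^ n" .
  then show ?thesis using b by simp
qed

section \<open>Carry-recording encoding of digit functions\<close>

text \<open>Digit functions on \<open>n\<close> positions: the cut of a deck of \<open>n\<close> cards into \<open>b\<close> piles.\<close>
abbreviation digit_funs :: "nat \<Rightarrow> nat \<Rightarrow> (nat \<Rightarrow> nat) set" where
  "digit_funs n b \<equiv> PiE {1..n} (\<lambda>_. {..<b})"

lemma card_digit_funs: "card (digit_funs n b) = b ^ n"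
  by (simp add: card_PiE)

lemma finite_digit_funs: "finite (digit_funs n b)"
  by (simp add: finite_PiE)

lemma sum_indicator_card:
  "finite A \<Longrightarrow> (\<Sum>k\<in>A. if P k then (1::'a::comm_semiring_1) else 0) = of_nat (card {k\<in>A. P k})"
  by (simp add: sum.If_cases Int_def conj_commute)

lemma card_filter_insert:
  assumes "finite A" "m \<notin> A"
  shows "card {k \<in> insert m A. P k} = card {k\<in>A. P k} + (if P m then 1 else 0)"
proof -
  have "{k \<in> insert m A. P k} = (if P m then insert m {k\<in>A. P k} else {k\<in>A. P k})" by auto
  then show ?thesis using assms by simp
qed

definition lex_descent :: "(nat \<Rightarrow> bool) \<Rightarrow> (nat \<Rightarrow> nat) \<Rightarrow> nat \<Rightarrow> bool" where
  "lex_descent D G k \<longleftrightarrow> G (k+1) < G k \<or> (G (k+1) = G k \<and> D k)"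

text \<open>The digit written at position \<open>k\<close> when \<open>G\<close> is read as a running sum with carries.\<close>
definition carry_digit :: "nat \<Rightarrow> (nat \<Rightarrow> bool) \<Rightarrow> (nat \<Rightarrow> nat) \<Rightarrow> nat \<Rightarrow> int" where
  "carry_digit b D G k = (int (G (k+1)) - int (G k) - of_bool (D k)) mod int b"

definition carry_encoding :: "nat \<Rightarrow> nat \<Rightarrow> (nat \<Rightarrow> bool) \<Rightarrow> (nat \<Rightarrow> nat) \<Rightarrow> nat list" where
  "carry_encoding n b D G = G 1 # map (\<lambda>k. nat (carry_digit b D G k)) [1..<n]"

lemma carry_digit_nonneg: "0 < b \<Longrightarrow> 0 \<le> carry_digit b D G k"
  by (simp add: carry_digit_def)

lemma carry_digit_step:
  assumes "0 < b" "G k < b" "G (k+1) < b"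
  shows "int (G (k+1)) - int (G k) - of_bool (D k)
       = carry_digit b D G k - int b * of_bool (lex_descent D G k)"
proof -
  let ?d = "int (G (k+1)) - int (G k) - of_bool (D k)"
  have range: "- int b \<le> ?d" "?d < int b" using assms by auto
  have lex: "lex_descent D G k \<longleftrightarrow> ?d < 0" by (auto simp: lex_descent_def)
  show ?thesis
  proof (cases "?d < 0")
    case True
    have "?d mod int b = (?d + int b) mod int b" by simp
    also have "\<dots> = ?d + int b" using range True by (intro mod_pos_pos_trivial) auto
    finally have "carry_digit b D G k = ?d + int b" unfolding carry_digit_def .
    then show ?thesis using True lex by simp
  next
    case False
    then have "carry_digit b D G k = ?d" unfolding carry_digit_def using range by simp
    then show ?thesis using False lex by simp
  qed
qed

lemma carry_telescope:
  assumes b: "0 < b" and G: "\<forall>k\<in>{1..n}. G k < b"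
  shows "1 \<le> m \<Longrightarrow> m \<le> n \<Longrightarrow>
    int b * int (card {k\<in>{1..<m}. lex_descent D G k}) + int (G m)
      = int (G 1) + (\<Sum>k\<in>{1..<m}. carry_digit b D G k + of_bool (D k))"
proof (induction m)
  case 0
  then show ?case by simp
next
  case (Suc m)
  show ?case
  proof (cases "m = 0")
    case True
    then show ?thesis by simp
  next
    case False
    then have IH: "int b * int (card {k\<in>{1..<m}. lex_descent D G k}) + int (G m)
       = int (G 1) + (\<Sum>k\<in>{1..<m}. carry_digit b D G k + of_bool (D k))"
      using Suc by simp
    have split: "{1..<Suc m} = insert m {1..<m}" using False by auto
    have "int (G (m+1)) - int (G m) - of_bool (D m)
        = carry_digit b D G m - int b * of_bool (lex_descent D G m)"
      using b G Suc.prems False by (intro carry_digit_step) auto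
    moreover have "card {k\<in>{1..<Suc m}. lex_descent D G k}
        = card {k\<in>{1..<m}. lex_descent D G k} + of_bool (lex_descent D G m)"
      unfolding split by (subst card_filter_insert) auto
    ultimately show ?thesis using IH unfolding split by (simp add: algebra_simps)
  qed
qed

lemma sum_carry_encoding:
  assumes "0 < b"
  shows "int (sum_list (carry_encoding n b D G)) = int (G 1) + (\<Sum>k\<in>{1..<n}. carry_digit b D G k)"
proof -
  have "int (sum_list (map (\<lambda>k. nat (carry_digit b D G k)) [1..<n]))
      = int (\<Sum>k\<in>{1..<n}. nat (carry_digit b D G k))"
    by (simp add: sum_set_upt_conv_sum_list_nat[symmetric])
  also have "\<dots> = (\<Sum>k\<in>{1..<n}. carry_digit b D G k)"
    using carry_digit_nonneg[OF assms] by simp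
  finally show ?thesis unfolding carry_encoding_def by simp
qed

lemma carry_encoding_div:
  assumes "0 < b" "1 \<le> n" "\<forall>k\<in>{1..n}. G k < b" "j = card {k\<in>{1..<n}. D k}"
  shows "(j + sum_list (carry_encoding n b D G)) div b = card {k\<in>{1..<n}. lex_descent D G k}"
proof -
  have "(\<Sum>k\<in>{1..<n}. of_bool (D k)) = int j"
    unfolding assms(4) by (simp add: Int_def conj_commute)
  then have "int (j + sum_list (carry_encoding n b D G))
      = int b * int (card {k\<in>{1..<n}. lex_descent D G k}) + int (G n)"
    using carry_telescope[OF assms(1,3) assms(2) order_refl, of D] sum_carry_encoding[OF assms(1)]
    by (simp add: sum.distrib)
  then have "j + sum_list (carry_encoding n b D G) = b * card {k\<in>{1..<n}. lex_descent D G k} + G n"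
    by (metis of_nat_add of_nat_eq_iff of_nat_mult)
  moreover have "G n < b" using assms by auto
  ultimately show ?thesis using assms(1) by simp
qed

lemma nth_carry_encoding:
  "1 \<le> k \<Longrightarrow> k < n \<Longrightarrow> carry_encoding n b D G ! k = nat (carry_digit b D G k)"
  unfolding carry_encoding_def by (cases k) auto

lemma carry_encoding_in_digit_lists:
  assumes "0 < b" "1 \<le> n" "G \<in> digit_funs n b"
  shows "carry_encoding n b D G \<in> digit_lists b n"
proof -
  have "G 1 < b" using assms by auto
  moreover have "nat (carry_digit b D G k) < b" for k
    unfolding carry_digit_def using assms(1) by (simp add: nat_less_iff)
  ultimately show ?thesis unfolding digit_lists_def carry_encoding_def using assms(2) by auto
qed

lemma carry_digit_recover:
  assumes "0 < b" "G (k+1) < b"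
  shows "int (G (k+1)) = (carry_digit b D G k + int (G k) + of_bool (D k)) mod int b"
proof -
  have "(carry_digit b D G k + int (G k) + of_bool (D k)) mod int b
      = ((int (G (k+1)) - int (G k) - of_bool (D k)) + (int (G k) + of_bool (D k))) mod int b"
    unfolding carry_digit_def by (metis add.assoc mod_add_left_eq)
  also have "\<dots> = int (G (k+1))" using assms by simp
  finally show ?thesis by simp
qed

lemma carry_encoding_inj:
  assumes "0 < b"
  shows "inj_on (carry_encoding n b D) (digit_funs n b)"
proof
  fix G G' assume G: "G \<in> digit_funs n b" and G': "G' \<in> digit_funs n b"
    and eq: "carry_encoding n b D G = carry_encoding n b D G'"
  have digit_eq: "carry_digit b D G k = carry_digit b D G' k" if "1 \<le> k" "k < n" for k
    using eq nth_carry_encoding[OF that] carry_digit_nonneg[OF assms] by (metis eq_nat_nat_iff)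
  have "1 \<le> k \<longrightarrow> k \<le> n \<longrightarrow> G k = G' k" for k
  proof (induction k)
    case (Suc k)
    show ?case
    proof (cases "k = 0")
      case True
      then show ?thesis using eq unfolding carry_encoding_def by simp
    next
      case False
      show ?thesis
      proof (intro impI)
        assume "1 \<le> Suc k" and k: "Suc k \<le> n"
        then have "G (k+1) < b" "G' (k+1) < b" using G G' by auto
        then show "G (Suc k) = G' (Suc k)"
          using carry_digit_recover[OF assms, of G k D] carry_digit_recover[OF assms, of G' k D]
            Suc False k digit_eq[of k] by simp
      qed
    qed
  qed simp
  then show "G = G'" using G G' by (intro PiE_ext[OF G G']) auto
qed

lemma carry_encoding_bij:
  assumes "0 < b" "1 \<le> n"
  shows "bij_betw (carry_encoding n b D) (digit_funs n b) (digit_lists b n)"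
proof -
  have "carry_encoding n b D ` digit_funs n b \<subseteq> digit_lists b n"
    using carry_encoding_in_digit_lists[OF assms] by auto
  moreover have "card (carry_encoding n b D ` digit_funs n b) = card (digit_lists b n)"
    unfolding card_image[OF carry_encoding_inj[OF assms(1)]] card_digit_funs card_digit_lists ..
  ultimately have "carry_encoding n b D ` digit_funs n b = digit_lists b n"
    using finite_digit_lists by (metis card_subset_eq)
  then show ?thesis using carry_encoding_inj[OF assms(1)] by (simp add: bij_betw_def)
qed

lemma lex_descent_count:
  assumes "0 < b" "1 \<le> n" "j = card {k\<in>{1..<n}. D k}"
  shows "(\<Sum>G\<in>digit_funs n b. if card {k\<in>{1..<n}. lex_descent D G k} = i then 1 else 0)
       = carries n b j i * real b ^ n"
proof -
  have "(\<Sum>G\<in>digit_funs n b. if card {k\<in>{1..<n}. lex_descent D G k} = i then (1::real) else 0)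
      = (\<Sum>G\<in>digit_funs n b. if (j + sum_list (carry_encoding n b D G)) div b = i then 1 else 0)"
  proof (intro sum.cong refl)
    fix G assume "G \<in> digit_funs n b"
    then have "\<forall>k\<in>{1..n}. G k < b" by auto
    then show "(if card {k\<in>{1..<n}. lex_descent D G k} = i then (1::real) else 0)
        = (if (j + sum_list (carry_encoding n b D G)) div b = i then 1 else 0)"
      using carry_encoding_div[OF assms(1,2) _ assms(3)] by simp
  qed
  also have "\<dots> = (\<Sum>xs\<in>digit_lists b n. if (j + sum_list xs) div b = i then 1 else 0)"
    by (rule sum.reindex_bij_betw[OF carry_encoding_bij[OF assms(1,2)]])
  also have "\<dots> = carries n b j i * real b ^ n"
    using carries_digit_count[OF assms(1)] by simp
  finally show ?thesis .
qed

section \<open>Descents\<close>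

lemma des_eq_card: "des n \<sigma> = card {k\<in>{1..<n}. \<sigma> (Suc k) < \<sigma> k}"
proof -
  have "{1..n-1} = {1..<n}" by auto
  then show ?thesis unfolding des_def by simp
qed

lemma des_le: "des n \<sigma> \<le> n - 1"
proof -
  have "des n \<sigma> \<le> card {1..n-1}" unfolding des_def by (intro card_mono) auto
  then show ?thesis by simp
qed

lemma des_id: "des n id = 0"
  unfolding des_def by simp

lemma des_zero_imp_id:
  assumes p: "\<sigma> permutes {1..n}" and d: "des n \<sigma> = 0"
  shows "\<sigma> = id"
proof -
  have step: "\<sigma> k < \<sigma> (Suc k)" if "k \<in> {1..<n}" for k
  proof -
    have "\<not> \<sigma> (Suc k) < \<sigma> k" using d that unfolding des_eq_card by auto
    moreover have "\<sigma> (Suc k) \<noteq> \<sigma> k" using permutes_inj[OF p] unfolding inj_def by (metis n_not_Suc_n)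
    ultimately show ?thesis by simp
  qed
  have ge: "k \<le> \<sigma> k" if "k \<in> {1..n}" for k
    using that
  proof (induction k)
    case (Suc k)
    then show ?case using permutes_in_image[OF p, of 1] step[of k] by (cases "k = 0") auto
  qed simp
  have "(\<Sum>k\<in>{1..n}. \<sigma> k) = (\<Sum>k\<in>{1..n}. k)"
    using sum.permute[OF p, of "\<lambda>k. k"] by (simp add: comp_def)
  then have "\<sigma> k = k" if "k \<in> {1..n}" for k
    using sum_strict_mono_ex1[of "{1..n}" "\<lambda>k. k" \<sigma>] ge that le_neq_implies_less by fastforce
  then show ?thesis using permutes_not_in[OF p] by (auto simp: fun_eq_iff)
qed

section \<open>Counting weakly increasing digit functions with prescribed strict steps\<close>

definition compatible :: "nat \<Rightarrow> (nat \<Rightarrow> bool) \<Rightarrow> (nat \<Rightarrow> nat) \<Rightarrow> bool" where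
  "compatible n D x \<longleftrightarrow> (\<forall>k\<in>{1..<n}. x k + of_bool (D k) \<le> x (k+1))"

definition marks_below :: "(nat \<Rightarrow> bool) \<Rightarrow> nat \<Rightarrow> nat" where
  "marks_below D k = card {p\<in>{1..<k}. D p}"

text \<open>Stars and bars: the \<open>n+1\<close> slack values of a compatible digit function.\<close>
definition gap :: "nat \<Rightarrow> nat \<Rightarrow> (nat \<Rightarrow> bool) \<Rightarrow> (nat \<Rightarrow> nat) \<Rightarrow> nat \<Rightarrow> nat" where
  "gap n b D x i =
     (if i = 0 then x 1 else if i < n then x (i+1) - x i - of_bool (D i) else b - 1 - x n)"

definition gaps :: "nat \<Rightarrow> nat \<Rightarrow> (nat \<Rightarrow> bool) \<Rightarrow> (nat \<Rightarrow> nat) \<Rightarrow> nat list" where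
  "gaps n b D x = map (gap n b D x) [0..<Suc n]"

definition from_gaps :: "nat \<Rightarrow> (nat \<Rightarrow> bool) \<Rightarrow> nat list \<Rightarrow> nat \<Rightarrow> nat" where
  "from_gaps n D z k = (if k \<in> {1..n} then (\<Sum>i<k. z ! i) + marks_below D k else undefined)"

lemma marks_below_Suc: "1 \<le> k \<Longrightarrow> marks_below D (Suc k) = marks_below D k + of_bool (D k)"
proof -
  assume "1 \<le> k"
  then have "{1..<Suc k} = insert k {1..<k}" by auto
  then have "marks_below D (Suc k) = card {p\<in>insert k {1..<k}. D p}"
    unfolding marks_below_def by simp
  also have "\<dots> = marks_below D k + of_bool (D k)"
    unfolding marks_below_def by (subst card_filter_insert) auto
  finally show ?thesis .
qed

lemma length_gaps: "length (gaps n b D x) = Suc n"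
  by (simp add: gaps_def)

lemma nth_gaps: "i \<le> n \<Longrightarrow> gaps n b D x ! i = gap n b D x i"
  unfolding gaps_def by (simp del: upt_Suc)

lemma gap_partial_sum:
  assumes "compatible n D x"
  shows "1 \<le> k \<Longrightarrow> k \<le> n \<Longrightarrow> (\<Sum>i<k. gap n b D x i) + marks_below D k = x k"
proof (induction k)
  case (Suc k)
  show ?case
  proof (cases "k = 0")
    case True
    then show ?thesis by (simp add: gap_def marks_below_def)
  next
    case False
    then have "x k + of_bool (D k) \<le> x (k+1)" using assms Suc.prems unfolding compatible_def by auto
    then show ?thesis using Suc False marks_below_Suc[of k D] by (simp add: gap_def)
  qed
qed simp

lemma sum_gaps:
  assumes "compatible n D x" "1 \<le> n" "x n < b"
  shows "int (sum_list (gaps n b D x)) = int b - 1 - int (marks_below D n)"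
proof -
  have "sum_list (gaps n b D x) = (\<Sum>i<n. gap n b D x i) + (b - 1 - x n)"
    unfolding gaps_def sum_set_upt_conv_sum_list_nat[symmetric]
    using assms(2) by (simp add: atLeast0LessThan gap_def)
  then show ?thesis using gap_partial_sum[OF assms(1,2) order_refl, of b] assms(3) by linarith
qed

lemma from_gaps_gaps:
  assumes "x \<in> digit_funs n b" "compatible n D x"
  shows "from_gaps n D (gaps n b D x) = x"
proof
  fix k
  show "from_gaps n D (gaps n b D x) k = x k"
  proof (cases "k \<in> {1..n}")
    case True
    then have "(\<Sum>i<k. gaps n b D x ! i) = (\<Sum>i<k. gap n b D x i)"
      by (intro sum.cong refl) (simp add: nth_gaps)
    then show ?thesis using True gap_partial_sum[OF assms(2), of k b] unfolding from_gaps_def by auto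
  next
    case False
    then show ?thesis using assms(1) unfolding from_gaps_def by (auto simp: PiE_def extensional_def)
  qed
qed

lemma from_gaps_step:
  "k \<in> {1..<n} \<Longrightarrow>
    from_gaps n D z (k+1) = from_gaps n D z k + z ! k + of_bool (D k)"
  using marks_below_Suc[of k D] unfolding from_gaps_def by simp

lemma gaps_from_gaps:
  assumes "length z = Suc n" "sum_list z = b - 1 - marks_below D n" "1 \<le> n"
  shows "gaps n b D (from_gaps n D z) = z"
proof (rule nth_equalityI)
  show "length (gaps n b D (from_gaps n D z)) = length z" using assms by (simp add: length_gaps)
  fix i assume "i < length (gaps n b D (from_gaps n D z))"
  then have i: "i \<le> n" by (simp add: length_gaps)
  have total: "(\<Sum>i<n. z ! i) + z ! n = b - 1 - marks_below D n"
    using assms(1,2) by (simp add: sum_list_sum_nth atLeast0LessThan)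
  have "gap n b D (from_gaps n D z) i = z ! i"
  proof -
    consider "i = 0" | "0 < i" "i < n" | "i = n" "0 < i" using i by linarith
    then show ?thesis
    proof cases
      case 1
      then show ?thesis using assms(3) by (simp add: gap_def from_gaps_def marks_below_def)
    next
      case 2
      then show ?thesis using from_gaps_step[of i n D z] by (simp add: gap_def)
    next
      case 3
      then show ?thesis using total assms(3) by (simp add: gap_def from_gaps_def)
    qed
  qed
  then show "gaps n b D (from_gaps n D z) ! i = z ! i" using i by (simp add: nth_gaps)
qed

lemma from_gaps_compatible:
  assumes "length z = Suc n" "sum_list z = b - 1 - marks_below D n" "marks_below D n \<le> b - 1"
    "0 < b"
  shows "from_gaps n D z \<in> digit_funs n b" "compatible n D (from_gaps n D z)"
proof -
  have total: "(\<Sum>i<n. z ! i) + z ! n = b - 1 - marks_below D n"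
    using assms(1,2) by (simp add: sum_list_sum_nth atLeast0LessThan)
  show "from_gaps n D z \<in> digit_funs n b"
  proof (rule PiE_I)
    fix k assume k: "k \<in> {1..n}"
    have "(\<Sum>i<k. z ! i) \<le> (\<Sum>i<n. z ! i)" using k by (intro sum_mono2) auto
    moreover have "marks_below D k \<le> marks_below D n"
      unfolding marks_below_def using k by (intro card_mono) auto
    ultimately show "from_gaps n D z k \<in> {..<b}"
      using k total assms(3,4) unfolding from_gaps_def by simp
  qed (auto simp: from_gaps_def)
  show "compatible n D (from_gaps n D z)"
    unfolding compatible_def using from_gaps_step[of _ n D z] by simp
qed

lemma gaps_bij:
  assumes "1 \<le> n" "0 < b" "marks_below D n \<le> b - 1"
  shows "bij_betw (gaps n b D) {x\<in>digit_funs n b. compatible n D x}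
           {z. length z = Suc n \<and> sum_list z = b - 1 - marks_below D n}"
proof (rule bij_betw_byWitness[where f'="from_gaps n D"])
  show "\<forall>x\<in>{x\<in>digit_funs n b. compatible n D x}. from_gaps n D (gaps n b D x) = x"
    using from_gaps_gaps by blast
  show "\<forall>z\<in>{z. length z = Suc n \<and> sum_list z = b - 1 - marks_below D n}.
          gaps n b D (from_gaps n D z) = z"
    using gaps_from_gaps assms by blast
  show "gaps n b D ` {x\<in>digit_funs n b. compatible n D x}
          \<subseteq> {z. length z = Suc n \<and> sum_list z = b - 1 - marks_below D n}"
  proof safe
    fix x assume x: "x \<in> digit_funs n b" "compatible n D x"
    then have "x n < b" using assms by auto
    then have "int (sum_list (gaps n b D x)) = int b - 1 - int (marks_below D n)"
      by (rule sum_gaps[OF x(2) assms(1)])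
    then show "sum_list (gaps n b D x) = b - 1 - marks_below D n" using assms(3) by linarith
  qed (simp add: length_gaps)
  show "from_gaps n D ` {z. length z = Suc n \<and> sum_list z = b - 1 - marks_below D n}
          \<subseteq> {x\<in>digit_funs n b. compatible n D x}"
    using from_gaps_compatible assms by blast
qed

lemma card_compatible:
  assumes "1 \<le> n" "0 < b"
  shows "card {x\<in>digit_funs n b. compatible n D x}
       = ibinom (int n + int b - int (marks_below D n) - 1) n"
proof (cases "marks_below D n \<le> b - 1")
  case False
  have none: "{x\<in>digit_funs n b. compatible n D x} = {}"
  proof (rule ccontr)
    assume "{x\<in>digit_funs n b. compatible n D x} \<noteq> {}"
    then obtain x where x: "x \<in> digit_funs n b" "compatible n D x" by blast
    then have "x n < b" using assms by auto
    then have "int (sum_list (gaps n b D x)) = int b - 1 - int (marks_below D n)"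
      using sum_gaps x assms by blast
    then show False using False by linarith
  qed
  moreover have "ibinom (int n + int b - int (marks_below D n) - 1) n = 0"
    using False assms by (simp add: ibinom_def)
  ultimately show ?thesis by (simp only: none card.empty of_nat_0)
next
  case True
  define N where "N = b - 1 - marks_below D n"
  have "card {x\<in>digit_funs n b. compatible n D x} = card {z. length z = Suc n \<and> sum_list z = N}"
    unfolding N_def by (rule bij_betw_same_card[OF gaps_bij[OF assms True]])
  also have "\<dots> = (N + n) choose n"
    using card_length_sum_list[of "Suc n" N] binomial_symmetric[of N "N+n"] by simp
  moreover have "nat (int n + int b - int (marks_below D n) - 1) = N + n"
    unfolding N_def using True assms by linarith
  ultimately show ?thesis using True assms unfolding ibinom_def by auto
qed

section \<open>The rank permutation of a digit function and the shuffle measure\<close>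

definition lex_less :: "(nat \<Rightarrow> nat) \<Rightarrow> nat \<Rightarrow> nat \<Rightarrow> bool" where
  "lex_less F a c \<longleftrightarrow> F a < F c \<or> (F a = F c \<and> a < c)"

text \<open>\<open>rank_perm n F m\<close> is the rank of position \<open>m\<close> in this order: the arrangement produced by
  the b-shuffle with cut \<open>F\<close>.\<close>
definition rank_perm :: "nat \<Rightarrow> (nat \<Rightarrow> nat) \<Rightarrow> nat \<Rightarrow> nat" where
  "rank_perm n F m = (if m \<in> {1..n} then Suc (card {m'\<in>{1..n}. lex_less F m' m}) else m)"

lemma lex_less_trans: "lex_less F a c \<Longrightarrow> lex_less F c e \<Longrightarrow> lex_less F a e"
  unfolding lex_less_def by auto

lemma lex_less_irrefl: "\<not> lex_less F a a"
  unfolding lex_less_def by auto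

lemma lex_less_total: "a \<noteq> c \<Longrightarrow> lex_less F a c \<or> lex_less F c a"
  unfolding lex_less_def by auto

lemma rank_perm_mono:
  assumes "a \<in> {1..n}" "c \<in> {1..n}" "lex_less F a c"
  shows "rank_perm n F a < rank_perm n F c"
proof -
  have "{m'\<in>{1..n}. lex_less F m' a} \<subset> {m'\<in>{1..n}. lex_less F m' c}"
    using assms lex_less_trans[of F _ a c] lex_less_irrefl[of F a] by auto
  then have "card {m'\<in>{1..n}. lex_less F m' a} < card {m'\<in>{1..n}. lex_less F m' c}"
    by (intro psubset_card_mono) auto
  then show ?thesis using assms unfolding rank_perm_def by simp
qed

lemma rank_perm_less_iff:
  assumes "a \<in> {1..n}" "c \<in> {1..n}"
  shows "rank_perm n F a < rank_perm n F c \<longleftrightarrow> lex_less F a c"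
  using rank_perm_mono[OF assms] rank_perm_mono[OF assms(2,1)] lex_less_total[of a c F]
  by (metis less_asym' less_irrefl)

lemma rank_perm_range:
  assumes "a \<in> {1..n}"
  shows "rank_perm n F a \<in> {1..n}"
proof -
  have "{m'\<in>{1..n}. lex_less F m' a} \<subseteq> {1..n} - {a}" using lex_less_irrefl[of F a] by auto
  then have "card {m'\<in>{1..n}. lex_less F m' a} \<le> card ({1..n} - {a})" by (intro card_mono) auto
  then show ?thesis using assms unfolding rank_perm_def by auto
qed

lemma rank_perm_permutes: "rank_perm n F permutes {1..n}"
proof (rule bij_imp_permutes)
  have inj: "inj_on (rank_perm n F) {1..n}"
    by (rule inj_onI) (metis lex_less_total rank_perm_mono less_irrefl)
  moreover have "rank_perm n F ` {1..n} = {1..n}"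
    using rank_perm_range inj by (intro endo_inj_surj) auto
  ultimately show "bij_betw (rank_perm n F) {1..n} {1..n}" by (simp add: bij_betw_def)
qed (auto simp: rank_perm_def)

text \<open>\<open>F\<close> sorts to \<open>\<pi>\<close> iff \<open>\<pi>\<^sup>-\<^sup>1\<close> lists the positions in increasing lexicographic order;
  the converse direction uses that a permutation without descents is the identity.\<close>
lemma rank_perm_eq_iff:
  assumes pi: "\<pi> permutes {1..n}"
  shows "rank_perm n F = \<pi> \<longleftrightarrow> (\<forall>k\<in>{1..<n}. lex_less F (inv \<pi> k) (inv \<pi> (Suc k)))"
proof -
  have inv_in: "inv \<pi> k \<in> {1..n}" "inv \<pi> (Suc k) \<in> {1..n}" if "k \<in> {1..<n}" for k
    using that permutes_in_image[OF permutes_inv[OF pi]] by auto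
  show ?thesis
  proof
    assume r: "rank_perm n F = \<pi>"
    show "\<forall>k\<in>{1..<n}. lex_less F (inv \<pi> k) (inv \<pi> (Suc k))"
    proof
      fix k assume k: "k \<in> {1..<n}"
      have "rank_perm n F (inv \<pi> k) < rank_perm n F (inv \<pi> (Suc k))"
        unfolding r using permutes_inverses(1)[OF pi] by simp
      then show "lex_less F (inv \<pi> k) (inv \<pi> (Suc k))" using rank_perm_less_iff[OF inv_in[OF k]] by simp
    qed
  next
    assume chain: "\<forall>k\<in>{1..<n}. lex_less F (inv \<pi> k) (inv \<pi> (Suc k))"
    let ?\<sigma> = "rank_perm n F \<circ> inv \<pi>"
    have "?\<sigma> k < ?\<sigma> (Suc k)" if "k \<in> {1..<n}" for k
      using chain rank_perm_less_iff[OF inv_in[OF that]] that by simp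
    then have "{k\<in>{1..<n}. ?\<sigma> (Suc k) < ?\<sigma> k} = {}"
      using less_asym by blast
    then have "?\<sigma> = id"
      using des_zero_imp_id[OF permutes_compose[OF permutes_inv[OF pi] rank_perm_permutes]]
      unfolding des_eq_card by simp
    then have "rank_perm n F \<circ> (inv \<pi> \<circ> \<pi>) = \<pi>" by (simp add: o_assoc)
    then show "rank_perm n F = \<pi>" using permutes_inv_o(2)[OF pi] by simp
  qed
qed

lemma restrict_comp_bij:
  assumes "\<nu> permutes {1..n}"
  shows "bij_betw (\<lambda>F. restrict (F \<circ> \<nu>) {1..n}) (digit_funs n b) (digit_funs n b)"
proof (rule bij_betw_byWitness[where f'="\<lambda>G. restrict (G \<circ> inv \<nu>) {1..n}"])
  have inv: "inv \<nu> permutes {1..n}" using assms by (rule permutes_inv)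
  show "\<forall>F\<in>digit_funs n b. restrict (restrict (F \<circ> \<nu>) {1..n} \<circ> inv \<nu>) {1..n} = F"
    using permutes_in_image[OF inv] permutes_inverses(1)[OF assms]
    by (auto simp: PiE_def extensional_def fun_eq_iff)
  show "\<forall>F\<in>digit_funs n b. restrict (restrict (F \<circ> inv \<nu>) {1..n} \<circ> \<nu>) {1..n} = F"
    using permutes_in_image[OF assms] permutes_inverses(2)[OF assms]
    by (auto simp: PiE_def extensional_def fun_eq_iff)
  show "(\<lambda>F. restrict (F \<circ> \<nu>) {1..n}) ` digit_funs n b \<subseteq> digit_funs n b"
    using permutes_in_image[OF assms] by (auto simp: PiE_def Pi_def)
  show "(\<lambda>G. restrict (G \<circ> inv \<nu>) {1..n}) ` digit_funs n b \<subseteq> digit_funs n b"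
    using permutes_in_image[OF inv] by (auto simp: PiE_def Pi_def)
qed

text \<open>The number of cuts producing \<open>\<pi>\<close> is the numerator of \<open>Q_b(\<pi>)\<close>: after relabelling by
  \<open>\<pi>\<^sup>-\<^sup>1\<close> they are exactly the digit functions compatible with the descents of \<open>\<pi>\<^sup>-\<^sup>1\<close>.\<close>
lemma card_rank_perm_fiber:
  assumes pi: "\<pi> permutes {1..n}" and n: "1 \<le> n" and b: "0 < b"
  shows "real (card {F\<in>digit_funs n b. rank_perm n F = \<pi>})
       = ibinom (int n + int b - int (des n (inv \<pi>)) - 1) n"
proof -
  let ?\<nu> = "inv \<pi>"
  define D where "D k \<longleftrightarrow> ?\<nu> (Suc k) < ?\<nu> k" for k
  have "rank_perm n F = \<pi> \<longleftrightarrow> compatible n D (restrict (F \<circ> ?\<nu>) {1..n})" for F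
  proof -
    have "lex_less F (?\<nu> k) (?\<nu> (Suc k))
        \<longleftrightarrow> restrict (F \<circ> ?\<nu>) {1..n} k + of_bool (D k) \<le> restrict (F \<circ> ?\<nu>) {1..n} (k+1)"
      if "k \<in> {1..<n}" for k
    proof -
      have "?\<nu> k \<noteq> ?\<nu> (Suc k)"
        using permutes_inj[OF permutes_inv[OF pi]] unfolding inj_def by (metis n_not_Suc_n)
      then show ?thesis using that unfolding lex_less_def D_def by auto
    qed
    then show ?thesis unfolding rank_perm_eq_iff[OF pi] compatible_def by auto
  qed
  then have "real (card {F\<in>digit_funs n b. rank_perm n F = \<pi>})
      = (\<Sum>F\<in>digit_funs n b. if compatible n D (restrict (F \<circ> ?\<nu>) {1..n}) then 1 else 0)"
    by (simp only: sum_indicator_card[OF finite_digit_funs])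
  also have "\<dots> = (\<Sum>x\<in>digit_funs n b. if compatible n D x then 1 else 0)"
    by (rule sum.reindex_bij_betw[OF restrict_comp_bij[OF permutes_inv[OF pi]]])
  also have "\<dots> = ibinom (int n + int b - int (marks_below D n) - 1) n"
    by (simp only: sum_indicator_card[OF finite_digit_funs] card_compatible[OF n b])
  also have "marks_below D n = des n ?\<nu>"
    unfolding marks_below_def D_def des_eq_card ..
  finally show ?thesis .
qed

abbreviation perms :: "nat \<Rightarrow> (nat \<Rightarrow> nat) set" where
  "perms n \<equiv> {\<pi>. \<pi> permutes {1..n}}"

lemma finite_perms: "finite (perms n)"
  by (rule finite_permutations) simp

lemma Qb_pushforward:
  assumes n: "1 \<le> n" and b: "0 < b"
  shows "(\<Sum>\<pi>\<in>perms n. Qb n b \<pi> * \<Phi> \<pi>) = (\<Sum>F\<in>digit_funs n b. \<Phi> (rank_perm n F)) / real b ^ n"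
proof -
  have "(\<Sum>F\<in>digit_funs n b. \<Phi> (rank_perm n F))
      = (\<Sum>\<pi>\<in>perms n. \<Sum>F\<in>{F\<in>digit_funs n b. rank_perm n F = \<pi>}. \<Phi> (rank_perm n F))"
    by (rule sum.group[symmetric, OF finite_digit_funs finite_perms]) (use rank_perm_permutes in blast)
  also have "\<dots> = (\<Sum>\<pi>\<in>perms n. real (card {F\<in>digit_funs n b. rank_perm n F = \<pi>}) * \<Phi> \<pi>)"
    by (intro sum.cong refl) simp
  also have "\<dots> = (\<Sum>\<pi>\<in>perms n. Qb n b \<pi> * \<Phi> \<pi>) * real b ^ n"
    using b card_rank_perm_fiber[OF _ n b] by (simp add: Qb_def sum_distrib_right)
  finally show ?thesis using b by simp
qed

lemma sum_Qb: "1 \<le> n \<Longrightarrow> 0 < b \<Longrightarrow> (\<Sum>\<pi>\<in>perms n. Qb n b \<pi>) = 1"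
  using Qb_pushforward[of n b "\<lambda>_. 1"] card_digit_funs[of n b] by simp

lemma bij_comp_left_perms:
  assumes "\<tau> permutes {1..n}"
  shows "bij_betw (\<lambda>\<tau>'. inv \<tau> \<circ> \<tau>') (perms n) (perms n)"
  by (rule bij_betw_byWitness[where f'="\<lambda>\<pi>. \<tau> \<circ> \<pi>"])
     (use assms in \<open>auto simp: o_assoc permutes_inv_o permutes_compose permutes_inv\<close>)

lemma bij_inv_comp_perms:
  assumes "\<tau>' permutes {1..n}"
  shows "bij_betw (\<lambda>\<tau>. inv \<tau> \<circ> \<tau>') (perms n) (perms n)"
proof (rule bij_betw_byWitness[where f'="\<lambda>\<pi>. \<tau>' \<circ> inv \<pi>"])
  show "\<forall>\<tau>\<in>perms n. \<tau>' \<circ> inv (inv \<tau> \<circ> \<tau>') = \<tau>"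
    using assms by (auto simp: o_inv_distrib permutes_bij inv_inv_eq bij_imp_bij_inv permutes_inv_o o_assoc)
  show "\<forall>\<pi>\<in>perms n. inv (\<tau>' \<circ> inv \<pi>) \<circ> \<tau>' = \<pi>"
    using assms
    by (auto simp: o_inv_distrib permutes_bij inv_inv_eq bij_imp_bij_inv permutes_inv_o o_assoc[symmetric])
qed (use assms in \<open>auto simp: permutes_compose permutes_inv\<close>)

lemma sum_Qb_from_arrangement:
  assumes n: "1 \<le> n" and b: "0 < b" and t: "\<tau> permutes {1..n}"
  shows "(\<Sum>\<tau>'\<in>perms n. Qb n b (inv \<tau> \<circ> \<tau>')) = 1"
  using sum.reindex_bij_betw[OF bij_comp_left_perms[OF t], of "Qb n b"] sum_Qb[OF n b] by simp

section \<open>Descent classes and Eulerian numbers\<close>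

definition desc_class :: "nat \<Rightarrow> nat \<Rightarrow> (nat \<Rightarrow> nat) set" where
  "desc_class n j = {\<tau>. \<tau> permutes {1..n} \<and> des n (inv \<tau>) = j}"

lemma finite_desc_class: "finite (desc_class n j)"
  unfolding desc_class_def using finite_perms by simp

lemma desc_class_eq: "desc_class n j = {\<tau>\<in>perms n. des n (inv \<tau>) = j}"
  unfolding desc_class_def by simp

lemma sum_perms_desc_class:
  "(\<Sum>\<tau>\<in>perms n. if des n (inv \<tau>) = j then f \<tau> else 0) = (\<Sum>\<tau>\<in>desc_class n j. f \<tau>)"
  unfolding desc_class_def by (rule sum.mono_neutral_cong_right[OF finite_perms]) auto

lemma card_desc_class: "card (desc_class n j) = eulerian n j"
proof -
  have "bij_betw inv {\<sigma>. \<sigma> permutes {1..n} \<and> des n \<sigma> = j} (desc_class n j)"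
    unfolding desc_class_def
    by (rule bij_betw_byWitness[where f'=inv]) (auto simp: permutes_inv inv_inv_eq permutes_bij)
  from bij_betw_same_card[OF this] show ?thesis unfolding eulerian_def by simp
qed

lemma desc_class_0: "desc_class n 0 = {id}"
proof -
  have "\<tau> = id" if "\<tau> permutes {1..n}" "des n (inv \<tau>) = 0" for \<tau>
  proof -
    have "inv \<tau> = id" by (rule des_zero_imp_id[OF permutes_inv[OF that(1)] that(2)])
    then show ?thesis using that(1) by (metis inv_inv_eq permutes_bij inv_id)
  qed
  then show ?thesis unfolding desc_class_def by (auto simp: permutes_id des_id)
qed

lemma desc_class_empty:
  assumes "n \<le> j" "1 \<le> n"
  shows "desc_class n j = {}"
proof -
  have "des n (inv \<tau>) \<noteq> j" for \<tau>
    using des_le[of n "inv \<tau>"] assms by simp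
  then show ?thesis unfolding desc_class_def by blast
qed

text \<open>Reversing the first \<open>i+1\<close> positions gives a permutation with exactly \<open>i\<close> descents.\<close>
definition reverse_prefix :: "nat \<Rightarrow> nat \<Rightarrow> nat \<Rightarrow> nat" where
  "reverse_prefix n i k = (if k \<in> {1..n} \<and> k \<le> Suc i then Suc (Suc i) - k else k)"

lemma reverse_prefix_permutes:
  assumes "i < n"
  shows "reverse_prefix n i permutes {1..n}"
proof (rule bij_imp_permutes)
  have "reverse_prefix n i (reverse_prefix n i k) = k" "k \<in> {1..n} \<Longrightarrow> reverse_prefix n i k \<in> {1..n}"
    for k using assms unfolding reverse_prefix_def by auto
  then show "bij_betw (reverse_prefix n i) {1..n} {1..n}"
    by (intro bij_betw_byWitness[where f'="reverse_prefix n i"]) auto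
qed (auto simp: reverse_prefix_def)

lemma des_reverse_prefix:
  assumes "i < n"
  shows "des n (reverse_prefix n i) = i"
proof -
  have "reverse_prefix n i (Suc k) < reverse_prefix n i k \<longleftrightarrow> k \<in> {1..i}" if "k \<in> {1..<n}" for k
    using assms that unfolding reverse_prefix_def by auto
  then have "{k\<in>{1..<n}. reverse_prefix n i (Suc k) < reverse_prefix n i k} = {1..i}"
    using assms by auto
  then show ?thesis unfolding des_eq_card by simp
qed

lemma desc_class_nonempty:
  assumes "i < n"
  shows "desc_class n i \<noteq> {}"
proof -
  have "inv (reverse_prefix n i) \<in> desc_class n i"
    using reverse_prefix_permutes[OF assms] des_reverse_prefix[OF assms]
    unfolding desc_class_def by (simp add: permutes_inv inv_inv_eq permutes_bij)
  then show ?thesis by blast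
qed

lemma eulerian_pos: "i < n \<Longrightarrow> 0 < eulerian n i"
  using desc_class_nonempty finite_desc_class card_gt_0_iff card_desc_class by metis

section \<open>One shuffle step seen from the arrival arrangement\<close>

lemma des_rank_perm_comp:
  assumes r: "\<rho> permutes {1..n}"
  shows "des n (rank_perm n F \<circ> \<rho>)
       = card {k\<in>{1..<n}. lex_descent (\<lambda>k. \<rho> (Suc k) < \<rho> k) (restrict (F \<circ> \<rho>) {1..n}) k}"
proof -
  have "rank_perm n F (\<rho> (Suc k)) < rank_perm n F (\<rho> k)
      \<longleftrightarrow> lex_descent (\<lambda>k. \<rho> (Suc k) < \<rho> k) (restrict (F \<circ> \<rho>) {1..n}) k"
    if k: "k \<in> {1..<n}" for k
  proof -
    have a: "\<rho> (Suc k) \<in> {1..n}" "\<rho> k \<in> {1..n}" using k permutes_in_image[OF r] by auto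
    show ?thesis unfolding rank_perm_less_iff[OF a] lex_less_def lex_descent_def using k by auto
  qed
  then show ?thesis unfolding des_eq_card by (intro arg_cong[where f=card]) auto
qed

lemma sum_Qb_into_arrangement:
  assumes n: "1 \<le> n" and b: "0 < b" and t: "\<tau>' permutes {1..n}" and j: "des n (inv \<tau>') = j"
  shows "(\<Sum>\<tau>\<in>desc_class n i. Qb n b (inv \<tau> \<circ> \<tau>')) = carries n b j i"
proof -
  let ?\<rho> = "inv \<tau>'"
  have r: "?\<rho> permutes {1..n}" using t by (rule permutes_inv)
  define D where "D k \<longleftrightarrow> ?\<rho> (Suc k) < ?\<rho> k" for k
  have "(\<Sum>\<tau>\<in>desc_class n i. Qb n b (inv \<tau> \<circ> \<tau>'))
      = (\<Sum>\<tau>\<in>perms n. Qb n b (inv \<tau> \<circ> \<tau>') * (if des n (inv \<tau>) = i then 1 else 0))"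
    unfolding desc_class_def by (rule sum.mono_neutral_cong_left[OF finite_perms]) auto
  also have "\<dots> = (\<Sum>\<pi>\<in>perms n. Qb n b \<pi> * (if des n (\<pi> \<circ> ?\<rho>) = i then 1 else 0))"
    using sum.reindex_bij_betw[OF bij_inv_comp_perms[OF t],
        of "\<lambda>\<pi>. Qb n b \<pi> * (if des n (\<pi> \<circ> ?\<rho>) = i then 1 else 0)"] t
    by (simp add: o_assoc[symmetric] permutes_inv_o)
  also have "\<dots> = (\<Sum>F\<in>digit_funs n b. if des n (rank_perm n F \<circ> ?\<rho>) = i then 1 else 0) / real b ^ n"
    by (rule Qb_pushforward[OF n b])
  also have "(\<Sum>F\<in>digit_funs n b. if des n (rank_perm n F \<circ> ?\<rho>) = i then (1::real) else 0)
      = (\<Sum>F\<in>digit_funs n b.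
           if card {k\<in>{1..<n}. lex_descent D (restrict (F \<circ> ?\<rho>) {1..n}) k} = i then 1 else 0)"
    unfolding D_def des_rank_perm_comp[OF r] ..
  also have "\<dots> = (\<Sum>G\<in>digit_funs n b. if card {k\<in>{1..<n}. lex_descent D G k} = i then 1 else 0)"
    by (rule sum.reindex_bij_betw[OF restrict_comp_bij[OF r]])
  also have "\<dots> = carries n b j i * real b ^ n"
    by (rule lex_descent_count[OF b n]) (simp add: D_def j[symmetric] des_eq_card)
  finally show ?thesis using b by (simp add: comp_def)
qed

section \<open>Weights of shuffle sequences\<close>

definition perm_lists :: "nat \<Rightarrow> nat \<Rightarrow> (nat \<Rightarrow> nat) list set" where
  "perm_lists n m = {ms. length ms = m \<and> (\<forall>\<mu>\<in>set ms. \<mu> permutes {1..n})}"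

definition list_weight :: "nat \<Rightarrow> nat \<Rightarrow> (nat \<Rightarrow> nat) list \<Rightarrow> real" where
  "list_weight n b ms = (\<Prod>k<length ms. Qb n b (ms ! k))"

definition follows_path :: "nat \<Rightarrow> nat list \<Rightarrow> (nat \<Rightarrow> nat) list \<Rightarrow> bool" where
  "follows_path n js ms \<longleftrightarrow> (\<forall>k<length js. des n (inv (tau ms k)) = js ! k)"

definition path_weight :: "nat \<Rightarrow> nat \<Rightarrow> nat list \<Rightarrow> (nat \<Rightarrow> nat) \<Rightarrow> real" where
  "path_weight n b js \<tau> = (\<Sum>ms\<in>perm_lists n (length js - 1).
      list_weight n b ms * (if follows_path n js ms then 1 else 0) *
      (if tau ms (length ms) = \<tau> then 1 else 0))"

lemma pathprob_eq:
  "pathprob n b js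
     = (\<Sum>ms\<in>perm_lists n (length js - 1). list_weight n b ms * (if follows_path n js ms then 1 else 0))"
  unfolding pathprob_def perm_lists_def list_weight_def follows_path_def by simp

lemma tau_0: "tau ms 0 = id"
  by (simp add: tau_def)

lemma tau_snoc_le: "k \<le> length ms \<Longrightarrow> tau (ms @ [\<mu>]) k = tau ms k"
  by (simp add: tau_def)

lemma tau_snoc_last: "tau (ms @ [\<mu>]) (Suc (length ms)) = tau ms (length ms) \<circ> \<mu>"
  by (simp add: tau_def)

lemma tau_permutes:
  assumes "\<forall>\<mu>\<in>set ms. \<mu> permutes S"
  shows "tau ms k permutes S"
proof -
  have "foldl (\<circ>) f xs permutes S" if "\<forall>\<mu>\<in>set xs. \<mu> permutes S" "f permutes S" for f xs
    using that by (induction xs arbitrary: f) (auto intro: permutes_compose)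
  then show ?thesis
    unfolding tau_def using assms by (auto dest: in_set_takeD intro: permutes_id)
qed

lemma tau_last_in_perms: "ms \<in> perm_lists n m \<Longrightarrow> tau ms (length ms) \<in> perms n"
  using tau_permutes unfolding perm_lists_def by blast

lemma sum_perm_lists_Suc:
  "(\<Sum>ms\<in>perm_lists n (Suc m). h ms) = (\<Sum>ms\<in>perm_lists n m. \<Sum>\<mu>\<in>perms n. h (ms @ [\<mu>]))"
proof -
  have e: "perm_lists n (Suc m) = (\<lambda>(ms, \<mu>). ms @ [\<mu>]) ` (perm_lists n m \<times> perms n)"
  proof
    show "perm_lists n (Suc m) \<subseteq> (\<lambda>(ms, \<mu>). ms @ [\<mu>]) ` (perm_lists n m \<times> perms n)"
    proof
      fix xs assume xs: "xs \<in> perm_lists n (Suc m)"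
      then have "xs \<noteq> []" unfolding perm_lists_def by auto
      then obtain ms \<mu> where "xs = ms @ [\<mu>]" by (metis rev_exhaust)
      then show "xs \<in> (\<lambda>(ms, \<mu>). ms @ [\<mu>]) ` (perm_lists n m \<times> perms n)"
        using xs unfolding perm_lists_def by force
    qed
  qed (auto simp: perm_lists_def)
  have i: "inj_on (\<lambda>(ms, \<mu>). ms @ [\<mu>]) (perm_lists n m \<times> perms n)"
    by (auto simp: inj_on_def)
  have "(\<Sum>ms\<in>perm_lists n (Suc m). h ms) = (\<Sum>(ms, \<mu>)\<in>perm_lists n m \<times> perms n. h (ms @ [\<mu>]))"
    unfolding e by (subst sum.reindex[OF i]) (simp add: case_prod_beta)
  also have "\<dots> = (\<Sum>ms\<in>perm_lists n m. \<Sum>\<mu>\<in>perms n. h (ms @ [\<mu>]))"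
    by (rule sum.cartesian_product[symmetric])
  finally show ?thesis .
qed

lemma pathprob_eq_sum_path_weight: "pathprob n b js = (\<Sum>\<tau>\<in>perms n. path_weight n b js \<tau>)"
proof -
  have "pathprob n b js = (\<Sum>ms\<in>perm_lists n (length js - 1). \<Sum>\<tau>\<in>perms n.
      list_weight n b ms * (if follows_path n js ms then 1 else 0) *
      (if tau ms (length ms) = \<tau> then 1 else 0))"
    unfolding pathprob_eq
  proof (intro sum.cong refl)
    fix ms assume ms: "ms \<in> perm_lists n (length js - 1)"
    have "(\<Sum>\<tau>\<in>perms n. if tau ms (length ms) = \<tau> then 1 else 0) = (1::real)"
      using tau_last_in_perms[OF ms] finite_perms by (simp add: sum.delta)
    then show "list_weight n b ms * (if follows_path n js ms then 1 else 0)
        = (\<Sum>\<tau>\<in>perms n. list_weight n b ms * (if follows_path n js ms then 1 else 0)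
             * (if tau ms (length ms) = \<tau> then 1 else 0))"
      by (simp flip: sum_distrib_left)
  qed
  also have "\<dots> = (\<Sum>\<tau>\<in>perms n. path_weight n b js \<tau>)"
    unfolding path_weight_def by (rule sum.swap)
  finally show ?thesis .
qed

lemma list_weight_snoc: "list_weight n b (ms @ [\<mu>]) = list_weight n b ms * Qb n b \<mu>"
  unfolding list_weight_def by (simp add: nth_append lessThan_Suc prod.insert)

lemma follows_path_snoc:
  assumes "js \<noteq> []" "length ms = length js - 1"
  shows "follows_path n (js @ [j]) (ms @ [\<mu>])
     \<longleftrightarrow> follows_path n js ms \<and> des n (inv (tau ms (length ms) \<circ> \<mu>)) = j"
proof -
  have L: "length js = Suc (length ms)" using assms by (cases js) auto
  have "follows_path n (js @ [j]) (ms @ [\<mu>]) \<longleftrightarrow>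
     (\<forall>k<length js. des n (inv (tau (ms @ [\<mu>]) k)) = (js @ [j]) ! k)
      \<and> des n (inv (tau (ms @ [\<mu>]) (length js))) = j"
    unfolding follows_path_def by (auto simp: less_Suc_eq nth_append)
  also have "(\<forall>k<length js. des n (inv (tau (ms @ [\<mu>]) k)) = (js @ [j]) ! k) \<longleftrightarrow> follows_path n js ms"
    unfolding follows_path_def using L by (auto simp: tau_snoc_le nth_append)
  also have "tau (ms @ [\<mu>]) (length js) = tau ms (length ms) \<circ> \<mu>"
    using L by (simp add: tau_snoc_last)
  finally show ?thesis .
qed

lemma sum_unique_step:
  fixes h :: "(nat \<Rightarrow> nat) \<Rightarrow> real"
  assumes T: "T permutes {1..n}" and t: "\<tau>' permutes {1..n}"
  shows "(\<Sum>\<mu>\<in>perms n. h \<mu> * (if T \<circ> \<mu> = \<tau>' then 1 else 0)) = h (inv T \<circ> \<tau>')"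
proof -
  have "T \<circ> \<mu> = \<tau>' \<longleftrightarrow> \<mu> = inv T \<circ> \<tau>'" for \<mu>
    using T by (auto simp: o_assoc permutes_inv_o)
  then have "(\<Sum>\<mu>\<in>perms n. h \<mu> * (if T \<circ> \<mu> = \<tau>' then 1 else 0))
      = (\<Sum>\<mu>\<in>perms n. if \<mu> = inv T \<circ> \<tau>' then h \<mu> else 0)"
    by (intro sum.cong refl) simp
  also have "\<dots> = h (inv T \<circ> \<tau>')"
    using T t finite_perms by (simp add: sum.delta' permutes_compose permutes_inv)
  finally show ?thesis .
qed

lemma path_weight_snoc_term:
  assumes js: "js \<noteq> []" and t: "\<tau>' permutes {1..n}" and ms: "ms \<in> perm_lists n (length js - 1)"
  shows "(\<Sum>\<mu>\<in>perms n. list_weight n b (ms @ [\<mu>]) * (if follows_path n (js @ [j]) (ms @ [\<mu>]) then 1 else 0)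
            * (if tau (ms @ [\<mu>]) (length (ms @ [\<mu>])) = \<tau>' then 1 else 0))
       = (if des n (inv \<tau>') = j then 1 else 0) * (\<Sum>\<tau>\<in>perms n.
            list_weight n b ms * (if follows_path n js ms then 1 else 0)
            * (if tau ms (length ms) = \<tau> then 1 else 0) * Qb n b (inv \<tau> \<circ> \<tau>'))"
proof -
  let ?T = "tau ms (length ms)"
  let ?c = "list_weight n b ms * (if follows_path n js ms then 1 else 0)"
  have l: "length ms = length js - 1" and T: "?T permutes {1..n}"
    using ms tau_last_in_perms[OF ms] unfolding perm_lists_def by auto
  have "(\<Sum>\<mu>\<in>perms n. list_weight n b (ms @ [\<mu>]) * (if follows_path n (js @ [j]) (ms @ [\<mu>]) then 1 else 0)
            * (if tau (ms @ [\<mu>]) (length (ms @ [\<mu>])) = \<tau>' then 1 else 0))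
      = ?c * (\<Sum>\<mu>\<in>perms n. (Qb n b \<mu> * (if des n (inv (?T \<circ> \<mu>)) = j then 1 else 0))
            * (if ?T \<circ> \<mu> = \<tau>' then 1 else 0))"
    unfolding sum_distrib_left
    by (intro sum.cong refl) (simp add: list_weight_snoc follows_path_snoc[OF js l] tau_snoc_last)
  also have "\<dots> = ?c * (Qb n b (inv ?T \<circ> \<tau>') * (if des n (inv \<tau>') = j then 1 else 0))"
  proof -
    have "?T \<circ> (inv ?T \<circ> \<tau>') = \<tau>'" using T by (simp add: o_assoc permutes_inv_o)
    then show ?thesis
      using sum_unique_step[OF T t, of "\<lambda>\<mu>. Qb n b \<mu> * (if des n (inv (?T \<circ> \<mu>)) = j then 1 else 0)"]
      by simp
  qed
  also have "\<dots> = (if des n (inv \<tau>') = j then 1 else 0) * (?c * Qb n b (inv ?T \<circ> \<tau>'))"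
    by (simp add: mult_ac)
  also have "?c * Qb n b (inv ?T \<circ> \<tau>')
      = (\<Sum>\<tau>\<in>perms n. if \<tau> = ?T then ?c * Qb n b (inv \<tau> \<circ> \<tau>') else 0)"
    using tau_last_in_perms[OF ms] finite_perms by (simp add: sum.delta')
  also have "\<dots> = (\<Sum>\<tau>\<in>perms n. ?c * (if ?T = \<tau> then 1 else 0) * Qb n b (inv \<tau> \<circ> \<tau>'))"
    by (intro sum.cong refl) auto
  finally show ?thesis .
qed

lemma path_weight_snoc:
  assumes js: "js \<noteq> []" and t: "\<tau>' permutes {1..n}"
  shows "path_weight n b (js @ [j]) \<tau>'
       = (if des n (inv \<tau>') = j then 1 else 0)
         * (\<Sum>\<tau>\<in>perms n. path_weight n b js \<tau> * Qb n b (inv \<tau> \<circ> \<tau>'))"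
proof -
  have lm: "length (js @ [j]) - 1 = Suc (length js - 1)" using js by (cases js) auto
  let ?I = "if des n (inv \<tau>') = j then 1 else (0::real)"
  have "path_weight n b (js @ [j]) \<tau>' = (\<Sum>ms\<in>perm_lists n (length js - 1). ?I * (\<Sum>\<tau>\<in>perms n.
            list_weight n b ms * (if follows_path n js ms then 1 else 0)
            * (if tau ms (length ms) = \<tau> then 1 else 0) * Qb n b (inv \<tau> \<circ> \<tau>')))"
    unfolding path_weight_def lm sum_perm_lists_Suc
    by (intro sum.cong refl) (rule path_weight_snoc_term[OF js t])
  also have "\<dots> = ?I * (\<Sum>\<tau>\<in>perms n. \<Sum>ms\<in>perm_lists n (length js - 1).
            list_weight n b ms * (if follows_path n js ms then 1 else 0)
            * (if tau ms (length ms) = \<tau> then 1 else 0) * Qb n b (inv \<tau> \<circ> \<tau>'))"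
    by (subst sum.swap) (simp add: sum_distrib_left)
  finally show ?thesis unfolding path_weight_def by (simp add: sum_distrib_right)
qed

section \<open>Lumpability: the descent process is a Markov chain\<close>

definition lumped :: "nat \<Rightarrow> nat \<Rightarrow> nat list \<Rightarrow> bool" where
  "lumped n b js \<longleftrightarrow> (\<forall>\<tau>\<in>perms n. path_weight n b js \<tau>
      = (if des n (inv \<tau>) = last js then pathprob n b js / eulerian n (last js) else 0))"

lemma lumped_single: "lumped n b [j]"
proof -
  have perm_lists_0: "perm_lists n 0 = {[]}" by (auto simp: perm_lists_def)
  have W: "path_weight n b [j] \<tau> = (if j = 0 \<and> \<tau> = id then 1 else 0)" for \<tau>
    unfolding path_weight_def by (auto simp: perm_lists_0 list_weight_def follows_path_def tau_0 des_id)
  have P: "pathprob n b [j] = (if j = 0 then 1 else 0)"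
    unfolding pathprob_eq by (simp add: perm_lists_0 list_weight_def follows_path_def tau_0 des_id)
  have "eulerian n 0 = 1" using card_desc_class[of n 0] by (simp add: desc_class_0)
  moreover have "\<tau> = id \<longleftrightarrow> des n (inv \<tau>) = 0" if "\<tau> permutes {1..n}" for \<tau>
    using desc_class_0[of n] that unfolding desc_class_def by auto
  ultimately show ?thesis unfolding lumped_def W P by auto
qed

text \<open>Given lumpability of \<open>js\<close>, one more step is computed with the time-reversed one-step
  identity.\<close>
lemma path_weight_step:
  assumes n: "1 \<le> n" and b: "0 < b" and js: "js \<noteq> []" and H: "lumped n b js"
    and t: "\<tau>' permutes {1..n}"
  shows "path_weight n b (js @ [j]) \<tau>'
       = (if des n (inv \<tau>') = j
          then pathprob n b js / eulerian n (last js) * carries n b j (last js) else 0)"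
proof -
  let ?c = "pathprob n b js / eulerian n (last js)"
  have "(\<Sum>\<tau>\<in>perms n. path_weight n b js \<tau> * Qb n b (inv \<tau> \<circ> \<tau>'))
      = (\<Sum>\<tau>\<in>perms n. ?c * (if des n (inv \<tau>) = last js then Qb n b (inv \<tau> \<circ> \<tau>') else 0))"
    using H unfolding lumped_def by (intro sum.cong refl) simp
  also have "\<dots> = ?c * (\<Sum>\<tau>\<in>desc_class n (last js). Qb n b (inv \<tau> \<circ> \<tau>'))"
    by (simp only: sum_distrib_left[symmetric] sum_perms_desc_class)
  also have "\<dots> = ?c * carries n b (des n (inv \<tau>')) (last js)"
    using sum_Qb_into_arrangement[OF n b t refl] by simp
  finally show ?thesis unfolding path_weight_snoc[OF js t] by simp
qed

lemma pathprob_step: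
  assumes n: "1 \<le> n" and b: "0 < b" and js: "js \<noteq> []" and H: "lumped n b js"
  shows "pathprob n b (js @ [j])
       = eulerian n j * (pathprob n b js / eulerian n (last js) * carries n b j (last js))"
proof -
  let ?v = "pathprob n b js / eulerian n (last js) * carries n b j (last js)"
  have "pathprob n b (js @ [j]) = (\<Sum>\<tau>'\<in>perms n. path_weight n b (js @ [j]) \<tau>')"
    by (rule pathprob_eq_sum_path_weight)
  also have "\<dots> = (\<Sum>\<tau>'\<in>perms n. if des n (inv \<tau>') = j then ?v else 0)"
    by (intro sum.cong refl) (simp add: path_weight_step[OF n b js H])
  also have "\<dots> = (\<Sum>\<tau>'\<in>desc_class n j. ?v)"
    by (rule sum_perms_desc_class)
  finally show ?thesis by (simp add: card_desc_class)
qed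

lemma lumped_snoc:
  assumes n: "1 \<le> n" and b: "0 < b" and js: "js \<noteq> []" and H: "lumped n b js"
  shows "lumped n b (js @ [j])"
  unfolding lumped_def
proof
  fix \<tau> assume "\<tau> \<in> perms n"
  then have t: "\<tau> permutes {1..n}" by simp
  have "0 < eulerian n j" if "des n (inv \<tau>) = j"
  proof -
    have "\<tau> \<in> desc_class n j" using that t unfolding desc_class_def by simp
    then show ?thesis
      unfolding card_desc_class[symmetric] using finite_desc_class by (auto simp: card_gt_0_iff)
  qed
  then show "path_weight n b (js @ [j]) \<tau> = (if des n (inv \<tau>) = last (js @ [j])
      then pathprob n b (js @ [j]) / eulerian n (last (js @ [j])) else 0)"
    unfolding path_weight_step[OF n b js H t] pathprob_step[OF n b js H] by simp
qed

lemma lumped_path: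
  assumes "1 \<le> n" "0 < b"
  shows "js \<noteq> [] \<Longrightarrow> lumped n b js"
proof (induction js rule: rev_induct)
  case (snoc j js)
  then show ?case
    using lumped_single lumped_snoc[OF assms] by (cases "js = []") auto
qed simp

lemma pathprob_snoc:
  assumes "1 \<le> n" "0 < b" "js \<noteq> []"
  shows "pathprob n b (js @ [j])
       = eulerian n j * (pathprob n b js / eulerian n (last js) * carries n b j (last js))"
  using pathprob_step[OF assms lumped_path[OF assms]] .

lemma pathprob_support:
  assumes n: "1 \<le> n" and p: "pathprob n b js \<noteq> 0"
  shows "set js \<subseteq> {..<n}"
proof
  obtain ms where "list_weight n b ms * (if follows_path n js ms then 1 else 0) \<noteq> 0"
    using p unfolding pathprob_eq by (meson sum.not_neutral_contains_not_neutral)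
  then have "follows_path n js ms" by (auto split: if_splits)
  fix x assume "x \<in> set js"
  then obtain k where "k < length js" "x = js ! k" by (auto simp: in_set_conv_nth)
  then have "x = des n (inv (tau ms k))" using \<open>follows_path n js ms\<close> unfolding follows_path_def by auto
  then show "x \<in> {..<n}" using des_le[of n "inv (tau ms k)"] n by simp
qed

section \<open>Stationarity of the Eulerian distribution\<close>

text \<open>\<open>A(n,\<cdot>)\<close> is invariant under the reversed carries chain: each arrangement of class
  \<open>i\<close> distributes total weight 1 over its successors, grouped by their class.\<close>
lemma eulerian_carries_invariant:
  assumes n: "1 \<le> n" and b: "0 < b"
  shows "(\<Sum>j<n. real (eulerian n j) * carries n b j i) = real (eulerian n i)"
proof -
  have "(\<Sum>j<n. real (eulerian n j) * carries n b j i)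
      = (\<Sum>j<n. \<Sum>\<tau>'\<in>desc_class n j. carries n b (des n (inv \<tau>')) i)"
    by (simp add: desc_class_def card_desc_class[symmetric])
  also have "\<dots> = (\<Sum>\<tau>'\<in>perms n. carries n b (des n (inv \<tau>')) i)"
    unfolding desc_class_eq
  proof (rule sum.group[OF finite_perms])
    have "des n (inv \<tau>) < n" for \<tau>
      using des_le[of n "inv \<tau>"] n by linarith
    then show "(\<lambda>\<tau>. des n (inv \<tau>)) ` perms n \<subseteq> {..<n}" by auto
  qed simp
  also have "\<dots> = (\<Sum>\<tau>'\<in>perms n. \<Sum>\<tau>\<in>desc_class n i. Qb n b (inv \<tau> \<circ> \<tau>'))"
    by (intro sum.cong refl) (simp add: sum_Qb_into_arrangement[OF n b])
  also have "\<dots> = (\<Sum>\<tau>\<in>desc_class n i. \<Sum>\<tau>'\<in>perms n. Qb n b (inv \<tau> \<circ> \<tau>'))"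
    by (rule sum.swap)
  also have "\<dots> = (\<Sum>\<tau>\<in>desc_class n i. 1)"
    by (intro sum.cong refl) (rule sum_Qb_from_arrangement[OF n b], simp add: desc_class_def)
  also have "\<dots> = real (eulerian n i)"
    by (simp add: card_desc_class)
  finally show ?thesis .
qed

section \<open>The transition kernel of the descent process\<close>

definition shuffle_kernel :: "nat \<Rightarrow> nat \<Rightarrow> nat \<Rightarrow> nat \<Rightarrow> real" where
  "shuffle_kernel n b i j =
     (if i < n \<and> j < n then pi_eul n j * carries n b j i / pi_eul n i else 0)"

lemma shuffle_kernel_eq:
  "i < n \<Longrightarrow> j < n \<Longrightarrow>
    shuffle_kernel n b i j = real (eulerian n j) * carries n b j i / real (eulerian n i)"
  unfolding shuffle_kernel_def pi_eul_def by (simp add: field_simps)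

lemma shuffle_kernel_nonneg: "0 < b \<Longrightarrow> 0 \<le> shuffle_kernel n b i j"
  unfolding shuffle_kernel_def pi_eul_def by (simp add: carries_nonneg)

lemma shuffle_kernel_row_sum:
  assumes "1 \<le> n" "0 < b" "i < n"
  shows "(\<Sum>j<n. shuffle_kernel n b i j) = 1"
proof -
  have "(\<Sum>j<n. shuffle_kernel n b i j) = (\<Sum>j<n. real (eulerian n j) * carries n b j i) / eulerian n i"
    using assms(3) by (simp add: shuffle_kernel_eq sum_divide_distrib)
  then show ?thesis
    using eulerian_carries_invariant[OF assms(1,2)] eulerian_pos[OF assms(3)] by simp
qed

lemma shuffle_kernel_stationary:
  assumes "0 < b" "j < n"
  shows "(\<Sum>i<n. pi_eul n i * shuffle_kernel n b i j) = pi_eul n j"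
proof -
  have "pi_eul n i * shuffle_kernel n b i j = pi_eul n j * carries n b j i" if "i < n" for i
    using that assms(2) eulerian_pos[OF that] unfolding shuffle_kernel_def pi_eul_def by simp
  then have "(\<Sum>i<n. pi_eul n i * shuffle_kernel n b i j) = pi_eul n j * (\<Sum>i<n. carries n b j i)"
    by (simp add: sum_distrib_left)
  then show ?thesis using carries_row_sum[OF assms] by simp
qed

lemma pathprob_snoc_kernel:
  assumes n: "1 \<le> n" and b: "0 < b" and js: "js \<noteq> []"
  shows "pathprob n b (js @ [j]) = pathprob n b js * shuffle_kernel n b (last js) j"
proof (cases "pathprob n b js = 0")
  case True
  then show ?thesis using pathprob_snoc[OF n b js] by simp
next
  case False
  then have last: "last js < n" using pathprob_support[OF n] js by (meson last_in_set lessThan_iff subsetD)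
  show ?thesis
  proof (cases "j < n")
    case True
    then show ?thesis using pathprob_snoc[OF n b js] by (simp add: shuffle_kernel_eq[OF last])
  next
    case False
    then have "eulerian n j = 0"
      using desc_class_empty[of n j] n by (simp flip: card_desc_class)
    then show ?thesis using pathprob_snoc[OF n b js] False by (simp add: shuffle_kernel_def)
  qed
qed

theorem theorem2p2:
  fixes n b :: nat
  assumes "n \<ge> 2" and "b \<ge> 2"
  shows "\<exists>K :: nat \<Rightarrow> nat \<Rightarrow> real.
     (\<forall>i j. 0 \<le> K i j) \<and>
     (\<forall>i<n. (\<Sum>j<n. K i j) = 1) \<and>
     (\<forall>js. pathprob n b js \<noteq> 0 \<longrightarrow> set js \<subseteq> {..<n}) \<and>
     (\<forall>js j. js \<noteq> [] \<longrightarrow> pathprob n b (js @ [j]) = pathprob n b js * K (last js) j) \<and>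
     (\<forall>j<n. (\<Sum>i<n. pi_eul n i * K i j) = pi_eul n j) \<and>
     (\<forall>i<n. \<forall>j<n. K i j = pi_eul n j * carries n b j i / pi_eul n i)"
proof (intro exI[of _ "shuffle_kernel n b"] conjI allI impI)
  have n: "1 \<le> n" and b: "0 < b" using assms by auto
  fix i j js
  show "0 \<le> shuffle_kernel n b i j" by (rule shuffle_kernel_nonneg[OF b])
  show "i < n \<Longrightarrow> (\<Sum>j<n. shuffle_kernel n b i j) = 1" by (rule shuffle_kernel_row_sum[OF n b])
  show "pathprob n b js \<noteq> 0 \<Longrightarrow> set js \<subseteq> {..<n}" by (rule pathprob_support[OF n])
  show "js \<noteq> [] \<Longrightarrow> pathprob n b (js @ [j]) = pathprob n b js * shuffle_kernel n b (last js) j"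
    by (rule pathprob_snoc_kernel[OF n b])
  show "j < n \<Longrightarrow> (\<Sum>i<n. pi_eul n i * shuffle_kernel n b i j) = pi_eul n j"
    by (rule shuffle_kernel_stationary[OF b])
  show "i < n \<Longrightarrow> j < n \<Longrightarrow> shuffle_kernel n b i j = pi_eul n j * carries n b j i / pi_eul n i"
    by (simp add: shuffle_kernel_def)
qed

end
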